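(* Let $n\ge 2$, let $p>2$ be a prime, $M=(p-1)/2$, and let $\delta>0$ and $R>0$ be parameters such that $R\le n/\delta$, $\frac{n-1}{\delta^2}+n\left(\frac{R}{\delta}+\frac14\right)\le M$, and $|\tilde z_j^{(i)}|\le R$ for all $i\in\{1,2\}$, $j\in\{1,\dots,n\}$. Then the Exact Correlation Protocol (described in the context) implements the computation of the sample Pearson correlation $r$ with controlled leakage for the leakage function $$\ell(\mathbf{x}^{(1)},\mathbf{x}^{(2)})=\Big((\varepsilon_j^{(1)},\varepsilon_j^{(2)})_{j=1}^n,\ \sum_{j=1}^n z_j^{(1)}\varepsilon_j^{(2)},\ \sum_{j=1}^n z_j^{(2)}\varepsilon_j^{(1)}\Big),$$ against a passive (honest-but-curious), computationally unbounded adversary corrupting one of the two participants, assuming the participants have access to an ideal Beaver-triple functionality $\mathcal{F}_{\mathrm{BT}}$.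
   Context: Fixed-point encoding: for a prime $p>2$ and $M=(p-1)/2$, and $\delta>0$, let $\mathbb{Q}_{(M,\delta)}=\{x\delta : x\in\mathbb{Z},\ -M\le x\le M\}$. Define $\varphi_\delta:\mathbb{Q}_{(M,\delta)}\to\mathbb{F}_p$ by $\varphi_\delta(x\delta)=x \bmod p$; it is a bijection with inverse $\varphi_\delta^{-1}(y)=\delta\psi(y)$, where, representing $y\in\mathbb{F}_p$ by an integer in $\{0,\dots,p-1\}$, $\psi(y)=y$ if $y\le M$ and $\psi(y)=y-p$ otherwise. Data: participant $P_i$ ($i=1,2$) privately holds real samples $\mathbf{x}^{(i)}=(x_1^{(i)},\dots,x_n^{(i)})$ (not all equal). Let $\bar x^{(i)}$ be their mean, $s^{(i)}=\sqrt{\frac{1}{n-1}\sum_{j=1}^n(x_j^{(i)}-\bar x^{(i)})^2}$, and $z_j^{(i)}=(x_j^{(i)}-\bar x^{(i)})/s^{(i)}$. The sample Pearson correlation is $r=\frac{1}{n-1}\sum_{j=1}^n z_j^{(1)}z_j^{(2)}$. Each $z_j^{(i)}$ is rounded to a nearest element $\tilde z_j^{(i)}\in\mathbb{Q}_{(M,\delta)}$ and $\varepsilon_j^{(i)}=z_j^{(i)}-\tilde z_j^{(i)}\in[-\delta/2,\delta/2]$. Additive secret sharing: a sharing $[x]$ of $x\in\mathbb{F}_p$ consists of shares $[x]_1,[x]_2\in\mathbb{F}_p$, held by $P_1,P_2$, with $[x]_1+[x]_2=x$; the sharer picks one share uniformly at random. $\mathcal{F}_{\mathrm{BT}}$ supplies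 fresh Beaver triples: sharings $[u],[v],[w]$ with $u,v$ uniform in $\mathbb{F}_p$ and $w=uv$. To multiply $[x],[y]$ with a fresh triple, the participants open $x-u$ and $y-v$, and set $[z]_1=[w]_1+[u]_1(y-v)+[v]_1(x-u)+(x-u)(y-v)$, $[z]_2=[w]_2+[u]_2(y-v)+[v]_2(x-u)$, giving a sharing of $xy$. Exact Correlation Protocol: (1) $P_i$ computes $s^{(i)}$, $z_j^{(i)}$, $\tilde z_j^{(i)}$, $\varepsilon_j^{(i)}$ and sends $(\varepsilon_j^{(i)})_{j=1}^n$ to $P_{3-i}$. (2) $P_i$ computes $\sum_{j=1}^n z_j^{(i)}\varepsilon_j^{(3-i)}$ and sends it to $P_{3-i}$. (3) For each $j$, $P_i$ creates and distributes a sharing $[\varphi_\delta(\tilde z_j^{(i)})]$. (4) The participants compute $[a]=\sum_{j=1}^n[\varphi_\delta(\tilde z_j^{(1)})][\varphi_\delta(\tilde z_j^{(2)})]$ using one Beaver triple per product and local addition of shares. (5) $P_i$ sends $[a]_i$ to $P_{3-i}$; both recover $a$. (6) Each participant outputs $\frac{1}{n-1}\Big(\varphi_{\delta^2}^{-1}(a)+\sum_{i=1}^2\sum_{j=1}^n z_j^{(i)}\varepsilon_j^{(3-i)}-\sum_{j=1}^n\varepsilon_j^{(1)}\varepsilon_j^{(2)}\Big)$. Controlled leakage: In the real world, both participants first send their inputs to a null sink $\mathcal{N}$ (which discards them and replies nothing), then run the protocol using $\mathcal{F}_{\mathrm{BT}}$; $V^\ell_{\mathsf{real}}$ is the view (everything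 seen) of the corrupted participant. In the ideal world, both participants first send their inputs to a leaker $\mathcal{L}$, which gives $\ell(\mathbf{x}^{(1)},\mathbf{x}^{(2)})$ to a simulator $\mathcal{S}$; the honest participant gives its input to an ideal functionality $\mathcal{F}_r$ which outputs $r$ to both; the corrupted participant runs the protocol, but all messages from the honest party and from $\mathcal{F}_{\mathrm{BT}}$ are produced by $\mathcal{S}$, which may extract and submit the corrupted participant's input to $\mathcal{F}_r$ and receive $r$; $V^\ell_{\mathsf{ideal}}$ is the corrupted participant's view. The protocol implements the computation with controlled leakage (for $\ell$) if there is a simulator such that $\Pr[\mathcal{D}(V^\ell_{\mathsf{real}})=\mathsf{real}]=\Pr[\mathcal{D}(V^\ell_{\mathsf{ideal}})=\mathsf{real}]$ for every distinguisher $\mathcal{D}$. *)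

theory Defs
  imports "HOL-Probability.Probability"
begin

definition smean :: "real list \<Rightarrow> real" where
  "smean xs = sum_list xs / real (length xs)"

definition sdev :: "real list \<Rightarrow> real" where
  "sdev xs = sqrt (sum_list (map (\<lambda>x. (x - smean xs)^2) xs) / (real (length xs) - 1))"

definition zscores :: "real list \<Rightarrow> real list" where
  "zscores xs = map (\<lambda>x. (x - smean xs) / sdev xs) xs"

definition pearson :: "real list \<Rightarrow> real list \<Rightarrow> real" where
  "pearson xs ys = sum_list (map2 (*) (zscores xs) (zscores ys)) / (real (length xs) - 1)"

section \<open>Fixed-point encoding into F_p (F_p represented by the integers 0..p-1)\<close>

definition fpM :: "int \<Rightarrow> int" where
  "fpM p = (p - 1) div 2"

definition Qset :: "int \<Rightarrow> real \<Rightarrow> real set" where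
  "Qset p \<delta> = {of_int x * \<delta> | x. - fpM p \<le> x \<and> x \<le> fpM p}"

text \<open>phi_delta (x*delta) = x mod p; we pass the integer numerator x.\<close>
definition fp_phi :: "int \<Rightarrow> int \<Rightarrow> int" where
  "fp_phi p x = x mod p"

definition fp_psi :: "int \<Rightarrow> int \<Rightarrow> int" where
  "fp_psi p y = (if y \<le> fpM p then y else y - p)"

definition fp_phi_inv :: "int \<Rightarrow> real \<Rightarrow> int \<Rightarrow> real" where
  "fp_phi_inv p \<delta> y = \<delta> * of_int (fp_psi p y)"

definition nearest_rounding :: "int \<Rightarrow> real \<Rightarrow> (real \<Rightarrow> int) \<Rightarrow> bool" where
  "nearest_rounding p \<delta> rnd \<longleftrightarrow>
     (\<forall>z. - fpM p \<le> rnd z \<and> rnd z \<le> fpM p \<and>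
          (\<forall>q\<in>Qset p \<delta>. \<bar>z - of_int (rnd z) * \<delta>\<bar> \<le> \<bar>z - q\<bar>))"

definition zt_num :: "(real \<Rightarrow> int) \<Rightarrow> real list \<Rightarrow> int list" where
  "zt_num rnd xs = map rnd (zscores xs)"

definition zt :: "real \<Rightarrow> (real \<Rightarrow> int) \<Rightarrow> real list \<Rightarrow> real list" where
  "zt \<delta> rnd xs = map (\<lambda>z. of_int (rnd z) * \<delta>) (zscores xs)"

definition epsv :: "real \<Rightarrow> (real \<Rightarrow> int) \<Rightarrow> real list \<Rightarrow> real list" where
  "epsv \<delta> rnd xs = map (\<lambda>z. z - of_int (rnd z) * \<delta>) (zscores xs)"

primrec iid_list :: "'a pmf \<Rightarrow> nat \<Rightarrow> 'a list pmf" where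
  "iid_list D 0 = return_pmf []"
| "iid_list D (Suc n) = bind_pmf D (\<lambda>x. map_pmf (Cons x) (iid_list D n))"

definition unif_vec :: "int \<Rightarrow> nat \<Rightarrow> int list pmf" where
  "unif_vec p n = iid_list (pmf_of_set {0..<p}) n"

text \<open>Messages received by the corrupted participant P_c from the honest P_h and from F_BT.\<close>
record msgs =
  m_eps :: "real list"                  \<comment> \<open>step 1: (epsilon_j^(h))_j\<close>
  m_cross :: real                       \<comment> \<open>step 2: sum_j z_j^(h) epsilon_j^(c)\<close>
  m_shares :: "int list"                \<comment> \<open>step 3: shares [phi(tilde z_j^(h))]_c\<close>
  m_triples :: "(int \<times> int \<times> int) list" \<comment> \<open>step 4: F_BT shares ([u_j]_c,[v_j]_c,[w_j]_c)\<close>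
  m_open :: "(int \<times> int) list"         \<comment> \<open>step 4: P_h's shares of x_j-u_j and y_j-v_j\<close>
  m_final :: int                        \<comment> \<open>step 5: [a]_h\<close>

record view =
  v_input :: "real list"
  v_coins :: "int list"    \<comment> \<open>its random coins: the shares it picks in step 3\<close>
  v_msgs :: msgs
  v_output :: real         \<comment> \<open>its output (real world: step 6; ideal world: r from F_r)\<close>

text \<open>Coins: O1!j (resp. O2!j) is the share that P_1 (resp. P_2) picks uniformly and sends to
  the other party when sharing phi(tilde z_j^(1)) (resp. phi(tilde z_j^(2))); Us!j, Vs!j are
  the triple values u_j, v_j; RU!j, RV!j, RW!j are P_1's shares of u_j, v_j, w_j = u_j v_j
  chosen by F_BT (P_2's share being the difference).\<close>
definition exec_view ::
  "int \<Rightarrow> real \<Rightarrow> (real \<Rightarrow> int) \<Rightarrow> nat \<Rightarrow> real list \<Rightarrow> real list \<Rightarrow>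
   int list \<Rightarrow> int list \<Rightarrow> int list \<Rightarrow> int list \<Rightarrow> int list \<Rightarrow> int list \<Rightarrow> int list \<Rightarrow> view" where
  "exec_view p \<delta> rnd c x1 x2 O1 O2 Us Vs RU RV RW = (let
     n = length x1; h = 3 - c;
     k1 = zt_num rnd x1; k2 = zt_num rnd x2;
     e1 = epsv \<delta> rnd x1; e2 = epsv \<delta> rnd x2;
     z1 = zscores x1; z2 = zscores x2;
     X = (\<lambda>j. fp_phi p (k1 ! j)); Y = (\<lambda>j. fp_phi p (k2 ! j));
     shX = (\<lambda>i j. if i = (1::nat) then (X j - O1 ! j) mod p else O1 ! j);
     shY = (\<lambda>i j. if i = (1::nat) then O2 ! j else (Y j - O2 ! j) mod p);
     shU = (\<lambda>i j. if i = (1::nat) then RU ! j else (Us ! j - RU ! j) mod p);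
     shV = (\<lambda>i j. if i = (1::nat) then RV ! j else (Vs ! j - RV ! j) mod p);
     shW = (\<lambda>i j. if i = (1::nat) then RW ! j else ((Us ! j * Vs ! j) mod p - RW ! j) mod p);
     d = (\<lambda>i j. (shX i j - shU i j) mod p);
     e = (\<lambda>i j. (shY i j - shV i j) mod p);
     DD = (\<lambda>j. (d 1 j + d 2 j) mod p);
     EE = (\<lambda>j. (e 1 j + e 2 j) mod p);
     shZ = (\<lambda>i j. (shW i j + shU i j * EE j + shV i j * DD j
                    + (if i = (1::nat) then DD j * EE j else 0)) mod p);
     shA = (\<lambda>i. (\<Sum>j<n. shZ i j) mod p);
     a = (shA 1 + shA 2) mod p;
     cross12 = sum_list (map2 (*) z1 e2);
     cross21 = sum_list (map2 (*) z2 e1);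
     out = (fp_phi_inv p (\<delta>^2) a + (cross12 + cross21) - sum_list (map2 (*) e1 e2)) / (real n - 1)
   in \<lparr> v_input = (if c = 1 then x1 else x2),
        v_coins = (if c = 1 then O1 else O2),
        v_msgs = \<lparr> m_eps = (if c = 1 then e2 else e1),
                   m_cross = (if c = 1 then cross21 else cross12),
                   m_shares = map (\<lambda>j. if c = 1 then shY 1 j else shX 2 j) [0..<n],
                   m_triples = map (\<lambda>j. (shU c j, shV c j, shW c j)) [0..<n],
                   m_open = map (\<lambda>j. (d h j, e h j)) [0..<n],
                   m_final = shA h \<rparr>,
        v_output = out \<rparr>)"

definition real_view ::
  "int \<Rightarrow> real \<Rightarrow> (real \<Rightarrow> int) \<Rightarrow> nat \<Rightarrow> real list \<Rightarrow> real list \<Rightarrow> view pmf" where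
  "real_view p \<delta> rnd c x1 x2 = (let U = unif_vec p (length x1) in
     bind_pmf U (\<lambda>O1. bind_pmf U (\<lambda>O2. bind_pmf U (\<lambda>Us. bind_pmf U (\<lambda>Vs.
     bind_pmf U (\<lambda>RU. bind_pmf U (\<lambda>RV. bind_pmf U (\<lambda>RW.
       return_pmf (exec_view p \<delta> rnd c x1 x2 O1 O2 Us Vs RU RV RW)))))))))"

type_synonym leakage = "real list \<times> real list \<times> real \<times> real"

definition leak :: "real \<Rightarrow> (real \<Rightarrow> int) \<Rightarrow> real list \<Rightarrow> real list \<Rightarrow> leakage" where
  "leak \<delta> rnd x1 x2 =
     (epsv \<delta> rnd x1, epsv \<delta> rnd x2,
      sum_list (map2 (*) (zscores x1) (epsv \<delta> rnd x2)),
      sum_list (map2 (*) (zscores x2) (epsv \<delta> rnd x1)))"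

text \<open>A simulator for corrupted P_c receives the corrupted participant's (extracted) input
  and the shares it sends (equivalently its coins), the leakage l(x1,x2) and r from F_r,
  and produces (possibly at random) all messages the corrupted participant receives.\<close>
type_synonym simulator = "nat \<Rightarrow> real list \<Rightarrow> int list \<Rightarrow> leakage \<Rightarrow> real \<Rightarrow> msgs pmf"

definition ideal_view ::
  "simulator \<Rightarrow> int \<Rightarrow> real \<Rightarrow> (real \<Rightarrow> int) \<Rightarrow> nat \<Rightarrow> real list \<Rightarrow> real list \<Rightarrow> view pmf" where
  "ideal_view S p \<delta> rnd c x1 x2 = (let xc = (if c = 1 then x1 else x2); r = pearson x1 x2 in
     bind_pmf (unif_vec p (length xc)) (\<lambda>coins.
       map_pmf (\<lambda>m. \<lparr> v_input = xc, v_coins = coins, v_msgs = m, v_output = r \<rparr>)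
         (S c xc coins (leak \<delta> rnd x1 x2) r)))"

definition indisting :: "'v pmf \<Rightarrow> 'v pmf \<Rightarrow> bool" where
  "indisting V W \<longleftrightarrow>
     (\<forall>D :: 'v \<Rightarrow> bool. measure_pmf.prob V {v. D v} = measure_pmf.prob W {v. D v})"

definition admissible :: "nat \<Rightarrow> real list \<Rightarrow> bool" where
  "admissible n xs \<longleftrightarrow> length xs = n \<and> (\<exists>a\<in>set xs. \<exists>b\<in>set xs. a \<noteq> b)"

end

theory Submission
  imports Defs "HOL-Number_Theory.Cong"
begin

(*
  A corrupted participant receives, besides the leakage, only values that are masked by
  independent uniform elements of F_p: the honest party's input shares, its openings
  x_j - u_j and y_j - v_j, and the Beaver-triple shares.  Written as a function of the
  coins of a run, the part of the view seen by the corrupted party is a bijection of the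
  coin space, so it may be sampled uniformly.  The one remaining message, the honest share
  of a, is then forced: it is a minus the corrupted party's own share.  And a is known to
  the simulator, since (n - 1) r = delta^2 a + sum z^(1) eps^(2) + sum z^(2) eps^(1)
  - sum eps^(1) eps^(2) with everything but a leaked.  The numerical hypotheses give
  |a| <= M, so decoding a from F_p is exact and the protocol outputs r.
*)

section \<open>Uniform vectors over F_p\<close>

lemma bind_pmf_of_set_map_pmf:
  assumes "finite A" "A \<noteq> {}" "finite B" "B \<noteq> {}"
  shows "bind_pmf (pmf_of_set A) (\<lambda>a. map_pmf (f a) (pmf_of_set B)) =
         map_pmf (\<lambda>(a, b). f a b) (pmf_of_set (A \<times> B))"
proof -
  have "A \<times> B = (\<Union>a\<in>A. Pair a ` B)" by auto
  then have "pmf_of_set (A \<times> B) = bind_pmf (pmf_of_set A) (\<lambda>a. pmf_of_set (Pair a ` B))"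
    by (simp only:) (rule pmf_of_set_UN [where n = "card B"];
       auto simp: assms card_image inj_on_def disjoint_family_on_def)
  also have "\<dots> = bind_pmf (pmf_of_set A) (\<lambda>a. map_pmf (Pair a) (pmf_of_set B))"
    using assms by (simp add: map_pmf_of_set_inj inj_on_def)
  finally show ?thesis
    by (simp add: map_bind_pmf map_pmf_comp)
qed

lemma map_pmf_of_set_endo_inj:
  assumes "finite A" "A \<noteq> {}" "f ` A \<subseteq> A" "inj_on f A"
  shows "map_pmf f (pmf_of_set A) = pmf_of_set A"
  using assms by (simp add: map_pmf_of_set_inj endo_inj_surj)

definition zp_vectors :: "int \<Rightarrow> nat \<Rightarrow> int list set" where
  "zp_vectors p n = {xs. set xs \<subseteq> {0..<p} \<and> length xs = n}"

lemma finite_zp_vectors [simp]: "finite (zp_vectors p n)"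
  unfolding zp_vectors_def by (rule finite_lists_length_eq) simp

lemma zp_vectors_not_empty [simp]: "0 < p \<Longrightarrow> zp_vectors p n \<noteq> {}"
  by (auto simp: zp_vectors_def intro!: exI[of _ "replicate n 0"])

lemma zp_vectors_Suc: "zp_vectors p (Suc n) = (\<lambda>(x, xs). x # xs) ` ({0..<p} \<times> zp_vectors p n)"
  unfolding zp_vectors_def by (auto simp: length_Suc_conv image_iff)

lemma unif_vec_eq_pmf_of_set: "0 < p \<Longrightarrow> unif_vec p n = pmf_of_set (zp_vectors p n)"
proof (induction n)
  case 0
  have "zp_vectors p 0 = {[]}" by (auto simp: zp_vectors_def)
  then show ?case by (simp add: unif_vec_def pmf_of_set_singleton)
next
  case (Suc n)
  have "pmf_of_set (zp_vectors p (Suc n)) =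
        map_pmf (\<lambda>(x, xs). x # xs) (pmf_of_set ({0..<p} \<times> zp_vectors p n))"
    unfolding zp_vectors_Suc using Suc.prems by (intro map_pmf_of_set_inj [symmetric]) (auto simp: inj_on_def)
  also have "\<dots> = bind_pmf (pmf_of_set {0..<p}) (\<lambda>x. map_pmf (Cons x) (pmf_of_set (zp_vectors p n)))"
    using Suc.prems by (simp add: bind_pmf_of_set_map_pmf)
  finally show ?case using Suc by (simp add: unif_vec_def)
qed

lemma zp_vectors_eqI:
  assumes "xs \<in> zp_vectors p n" "ys \<in> zp_vectors p n" "\<And>j. j < n \<Longrightarrow> [xs ! j = ys ! j] (mod p)"
  shows "xs = ys"
proof (rule nth_equalityI)
  have len: "length xs = n" "length ys = n" and set: "set xs \<subseteq> {0..<p}" "set ys \<subseteq> {0..<p}"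
    using assms(1,2) by (simp_all add: zp_vectors_def)
  then show "length xs = length ys" by simp
  fix j assume "j < length xs"
  then have "j < n" "xs ! j \<in> {0..<p}" "ys ! j \<in> {0..<p}"
    using len set nth_mem by force+
  with assms(3) show "xs ! j = ys ! j"
    by (intro cong_less_imp_eq_int) auto
qed

lemma zp_vectors_eq_if_diff_left:
  assumes "xs \<in> zp_vectors p n" "ys \<in> zp_vectors p n"
    and "\<And>j. j < n \<Longrightarrow> (a j - xs ! j) mod p = (a j - ys ! j) mod p"
  shows "xs = ys"
proof (rule zp_vectors_eqI [OF assms(1,2)])
  fix j assume "j < n"
  with assms(3) have "[a j - xs ! j = a j - ys ! j] (mod p)"
    by (simp add: cong_def)
  then show "[xs ! j = ys ! j] (mod p)"
    using cong_diff [OF cong_refl [of "a j"]] by fastforce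
qed

lemma zp_vectors_eq_if_diff_right:
  assumes "xs \<in> zp_vectors p n" "ys \<in> zp_vectors p n"
    and "\<And>j. j < n \<Longrightarrow> (xs ! j - b j) mod p = (ys ! j - b j) mod p"
  shows "xs = ys"
proof (rule zp_vectors_eqI [OF assms(1,2)])
  fix j assume "j < n"
  with assms(3) have "[xs ! j - b j = ys ! j - b j] (mod p)"
    by (simp add: cong_def)
  then show "[xs ! j = ys ! j] (mod p)"
    using cong_add [OF _ cong_refl [of "b j"]] by fastforce
qed

lemma map_mod_in_zp_vectors: "0 < p \<Longrightarrow> map (\<lambda>j. f j mod p) [0..<n] \<in> zp_vectors p n"
  by (auto simp: zp_vectors_def)

section \<open>Arithmetic modulo p\<close>

(* d and e are the opened values x - u and y - v; only P_1 adds d e. *)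
lemma beaver_mult_cong:
  fixes p :: int
  assumes d: "[d = x - (u1 + u2)] (mod p)" and e: "[e = y - (v1 + v2)] (mod p)"
    and w: "[w1 + w2 = (u1 + u2) * (v1 + v2)] (mod p)"
  shows "[(w1 + u1 * e + v1 * d + d * e) + (w2 + u2 * e + v2 * d) = x * y] (mod p)"
proof -
  have "(w1 + u1 * e + v1 * d + d * e) + (w2 + u2 * e + v2 * d) =
        (w1 + w2) + (u1 + u2) * e + (v1 + v2) * d + d * e"
    by (simp add: algebra_simps)
  also have "[\<dots> = (u1 + u2) * (v1 + v2) + (u1 + u2) * (y - (v1 + v2)) + (v1 + v2) * (x - (u1 + u2))
                 + (x - (u1 + u2)) * (y - (v1 + v2))] (mod p)"
    using d e w by (intro cong_add cong_mult cong_refl)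
  also have "(u1 + u2) * (v1 + v2) + (u1 + u2) * (y - (v1 + v2)) + (v1 + v2) * (x - (u1 + u2))
                 + (x - (u1 + u2)) * (y - (v1 + v2)) = x * y"
    by (simp add: algebra_simps)
  finally show ?thesis .
qed

lemma eq_mod_diff_if_cong_add:
  fixes p :: int
  assumes "[a + b = s] (mod p)" "0 \<le> b" "b < p"
  shows "b = (s - a) mod p"
proof -
  have "[b = s - a] (mod p)"
    using cong_diff [OF assms(1) cong_refl [of a]] by simp
  then show ?thesis
    using assms(2,3) by (simp add: cong_def)
qed

lemma fp_psi_mod:
  assumes "0 < p" "- fpM p \<le> s" "s \<le> fpM p"
  shows "fp_psi p (s mod p) = s"
proof -
  have M: "2 * fpM p < p" by (simp add: fpM_def)
  show ?thesis
  proof (cases "0 \<le> s")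
    case True
    then have "s mod p = s" using assms M by (intro mod_pos_pos_trivial) auto
    then show ?thesis using assms by (simp add: fp_psi_def)
  next
    case False
    have "s mod p = (s + p) mod p" by simp
    also have "\<dots> = s + p" using assms M False by (intro mod_pos_pos_trivial) auto
    finally have "s mod p = s + p" .
    then show ?thesis using assms M False by (simp add: fp_psi_def)
  qed
qed

lemma fp_phi_sum_mult_mod:
  "(\<Sum>j\<in>A. fp_phi p (a j) * fp_phi p (b j)) mod p = (\<Sum>j\<in>A. a j * b j) mod p"
proof -
  have "[\<Sum>j\<in>A. fp_phi p (a j) * fp_phi p (b j) = (\<Sum>j\<in>A. a j * b j)] (mod p)"
    by (intro cong_sum cong_mult) (simp_all add: fp_phi_def cong_def)
  then show ?thesis by (simp add: cong_def)
qed

section \<open>Rounded z-scores\<close>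

lemma sum_zscores_squared:
  assumes "admissible n xs" "2 \<le> n"
  shows "(\<Sum>j<n. (zscores xs ! j)\<^sup>2) = real n - 1"
proof -
  define m where "m = smean xs"
  define S where "S = (\<Sum>j<n. (xs ! j - m)\<^sup>2)"
  have len: "length xs = n" using assms(1) by (simp add: admissible_def)
  have "S > 0"
  proof (rule ccontr)
    assume "\<not> S > 0"
    then have "S = 0" unfolding S_def by (metis sum_nonneg zero_le_power2 order_less_le)
    then have "\<forall>j<n. xs ! j = m" unfolding S_def by (subst (asm) sum_nonneg_eq_0_iff) auto
    then have "\<forall>a\<in>set xs. a = m" by (auto simp: in_set_conv_nth len)
    then show False using assms(1) unfolding admissible_def by metis
  qed
  moreover have "real n - 1 > 0" using assms(2) by simp
  moreover have "(sdev xs)\<^sup>2 = S / (real n - 1)"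
    using \<open>S > 0\<close> \<open>real n - 1 > 0\<close>
    by (simp add: sdev_def S_def m_def sum_list_sum_nth atLeast0LessThan len)
  moreover have "(\<Sum>j<n. (zscores xs ! j)\<^sup>2) = S / (sdev xs)\<^sup>2"
    by (simp add: S_def sum_divide_distrib zscores_def len m_def power_divide)
  ultimately show ?thesis by simp
qed

lemma abs_sum_mult_le_sum_squares:
  fixes a b :: "'i \<Rightarrow> real"
  shows "\<bar>\<Sum>j\<in>A. a j * b j\<bar> \<le> ((\<Sum>j\<in>A. (a j)\<^sup>2) + (\<Sum>j\<in>A. (b j)\<^sup>2)) / 2"
proof -
  have "\<bar>\<Sum>j\<in>A. a j * b j\<bar> \<le> (\<Sum>j\<in>A. \<bar>a j * b j\<bar>)" by (rule sum_abs)
  also have "\<dots> \<le> (\<Sum>j\<in>A. ((a j)\<^sup>2 + (b j)\<^sup>2) / 2)"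
  proof (rule sum_mono)
    fix j
    have "0 \<le> (\<bar>a j\<bar> - \<bar>b j\<bar>)\<^sup>2" by simp
    then show "\<bar>a j * b j\<bar> \<le> ((a j)\<^sup>2 + (b j)\<^sup>2) / 2"
      by (simp add: abs_mult power2_eq_square algebra_simps)
  qed
  also have "\<dots> = ((\<Sum>j\<in>A. (a j)\<^sup>2) + (\<Sum>j\<in>A. (b j)\<^sup>2)) / 2"
    by (simp add: sum_divide_distrib [symmetric] sum.distrib)
  finally show ?thesis .
qed

lemma nearest_rounding_error:
  assumes rnd: "nearest_rounding p \<delta> rnd" and "0 < \<delta>"
    and "\<bar>of_int (rnd z) * \<delta>\<bar> < of_int (fpM p) * \<delta>"
  shows "\<bar>z - of_int (rnd z) * \<delta>\<bar> \<le> \<delta> / 2"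
proof -
  define k where "k = rnd z"
  have k: "\<bar>k\<bar> < fpM p"
    using assms(2,3) by (simp add: k_def abs_mult)
  have "of_int (k + 1) * \<delta> \<in> Qset p \<delta>"
    unfolding Qset_def by (rule CollectI, rule exI [of _ "k + 1"]) (use k in auto)
  moreover have "of_int (k - 1) * \<delta> \<in> Qset p \<delta>"
    unfolding Qset_def by (rule CollectI, rule exI [of _ "k - 1"]) (use k in auto)
  ultimately
  have "\<bar>z - of_int k * \<delta>\<bar> \<le> \<bar>z - of_int (k + 1) * \<delta>\<bar>"
        and "\<bar>z - of_int k * \<delta>\<bar> \<le> \<bar>z - of_int (k - 1) * \<delta>\<bar>"
    using rnd unfolding nearest_rounding_def k_def by blast+
  then have "\<bar>z - of_int k * \<delta>\<bar> \<le> \<bar>(z - of_int k * \<delta>) - \<delta>\<bar>"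
        and "\<bar>z - of_int k * \<delta>\<bar> \<le> \<bar>(z - of_int k * \<delta>) + \<delta>\<bar>"
    by (simp_all add: algebra_simps)
  then show ?thesis using assms(2) unfolding k_def by arith
qed

lemma rounded_inner_bound:
  fixes z1 z2 :: "nat \<Rightarrow> real" and k1 k2 :: "nat \<Rightarrow> int"
  assumes "0 < \<delta>"
    and sq1: "(\<Sum>j<n. (z1 j)\<^sup>2) = real n - 1" and sq2: "(\<Sum>j<n. (z2 j)\<^sup>2) = real n - 1"
    and err1: "\<And>j. j < n \<Longrightarrow> \<bar>z1 j - of_int (k1 j) * \<delta>\<bar> \<le> \<delta> / 2"
    and err2: "\<And>j. j < n \<Longrightarrow> \<bar>z2 j - of_int (k2 j) * \<delta>\<bar> \<le> \<delta> / 2"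
    and rad1: "\<And>j. j < n \<Longrightarrow> \<bar>of_int (k1 j) * \<delta>\<bar> \<le> R"
    and rad2: "\<And>j. j < n \<Longrightarrow> \<bar>of_int (k2 j) * \<delta>\<bar> \<le> R"
  shows "\<bar>of_int (\<Sum>j<n. k1 j * k2 j)\<bar> \<le> (real n - 1) / \<delta>\<^sup>2 + real n * (R / \<delta> + 1 / 4)"
proof -
  define e1 where "e1 j = z1 j - of_int (k1 j) * \<delta>" for j
  define e2 where "e2 j = z2 j - of_int (k2 j) * \<delta>" for j
  define K where "K = (of_int (\<Sum>j<n. k1 j * k2 j) :: real)"
  have expand: "\<delta>\<^sup>2 * K =
        (\<Sum>j<n. z1 j * z2 j) - (\<Sum>j<n. z1 j * e2 j) - (\<Sum>j<n. e1 j * (of_int (k2 j) * \<delta>))"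
    by (simp add: K_def e1_def e2_def sum_distrib_left sum_subtractf [symmetric] algebra_simps power2_eq_square)
  have "\<delta>\<^sup>2 * \<bar>K\<bar> = \<bar>\<delta>\<^sup>2 * K\<bar>" by (simp add: abs_mult)
  also have "\<dots> \<le> \<bar>\<Sum>j<n. z1 j * z2 j\<bar> + \<bar>\<Sum>j<n. z1 j * e2 j\<bar> + \<bar>\<Sum>j<n. e1 j * (of_int (k2 j) * \<delta>)\<bar>"
    unfolding expand by linarith
  also have "\<dots> \<le> \<bar>\<Sum>j<n. z1 j * z2 j\<bar> + (\<Sum>j<n. \<bar>z1 j * e2 j\<bar>) + (\<Sum>j<n. \<bar>e1 j * (of_int (k2 j) * \<delta>)\<bar>)"
    by (intro add_mono sum_abs order_refl)
  finally have "\<delta>\<^sup>2 * \<bar>K\<bar> \<le>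
        \<bar>\<Sum>j<n. z1 j * z2 j\<bar> + (\<Sum>j<n. \<bar>z1 j * e2 j\<bar>) + (\<Sum>j<n. \<bar>e1 j * (of_int (k2 j) * \<delta>)\<bar>)" .
  moreover have "\<bar>\<Sum>j<n. z1 j * z2 j\<bar> \<le> real n - 1"
    using abs_sum_mult_le_sum_squares [of z1 z2 "{..<n}"] sq1 sq2 by simp
  moreover have "(\<Sum>j<n. \<bar>z1 j * e2 j\<bar>) \<le> (\<Sum>j<n. (R + \<delta> / 2) * (\<delta> / 2))"
  proof (rule sum_mono)
    fix j assume "j \<in> {..<n}"
    then have "\<bar>z1 j\<bar> \<le> R + \<delta> / 2" "\<bar>e2 j\<bar> \<le> \<delta> / 2"
      using err1 [of j] rad1 [of j] err2 [of j] abs_triangle_ineq [of "z1 j - of_int (k1 j) * \<delta>" "of_int (k1 j) * \<delta>"]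
      unfolding e2_def by auto
    then show "\<bar>z1 j * e2 j\<bar> \<le> (R + \<delta> / 2) * (\<delta> / 2)"
      unfolding abs_mult by (intro mult_mono) auto
  qed
  moreover have "(\<Sum>j<n. \<bar>e1 j * (of_int (k2 j) * \<delta>)\<bar>) \<le> (\<Sum>j<n. (\<delta> / 2) * R)"
  proof (rule sum_mono)
    fix j assume "j \<in> {..<n}"
    then show "\<bar>e1 j * (of_int (k2 j) * \<delta>)\<bar> \<le> (\<delta> / 2) * R"
      unfolding abs_mult [of "e1 j"] using err1 [of j] rad2 [of j] \<open>0 < \<delta>\<close> by (intro mult_mono) (auto simp: e1_def)
  qed
  ultimately have "\<delta>\<^sup>2 * \<bar>K\<bar> \<le>
      (real n - 1) + real n * ((R + \<delta> / 2) * (\<delta> / 2)) + real n * ((\<delta> / 2) * R)"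
    unfolding sum_constant card_lessThan by linarith
  also have "\<dots> = \<delta>\<^sup>2 * ((real n - 1) / \<delta>\<^sup>2 + real n * (R / \<delta> + 1 / 4))"
    using \<open>0 < \<delta>\<close> by (simp add: field_simps power2_eq_square)
  finally show ?thesis using \<open>0 < \<delta>\<close> by (simp add: K_def del: of_int_sum of_int_mult)
qed

(* The integer a of the protocol: its residue is opened in step 5. *)
definition rounded_inner :: "(real \<Rightarrow> int) \<Rightarrow> real list \<Rightarrow> real list \<Rightarrow> int" where
  "rounded_inner rnd x1 x2 = (\<Sum>j<length x1. zt_num rnd x1 ! j * zt_num rnd x2 ! j)"

lemma sum_list_map2_conv_sum:
  "length xs = n \<Longrightarrow> length ys = n \<Longrightarrow> sum_list (map2 f xs ys) = (\<Sum>j<n. f (xs ! j) (ys ! j))"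
  by (simp add: sum_list_sum_nth atLeast0LessThan)

lemma sum_zscores_mult_decompose:
  assumes "length x1 = length x2"
  shows "sum_list (map2 (*) (zscores x1) (zscores x2)) =
    \<delta>\<^sup>2 * of_int (rounded_inner rnd x1 x2)
    + (sum_list (map2 (*) (zscores x1) (epsv \<delta> rnd x2)) + sum_list (map2 (*) (zscores x2) (epsv \<delta> rnd x1)))
    - sum_list (map2 (*) (epsv \<delta> rnd x1) (epsv \<delta> rnd x2))"
proof -
  define n where "n = length x1"
  have len: "length (zscores x1) = n" "length (zscores x2) = n"
    "length (epsv \<delta> rnd x1) = n" "length (epsv \<delta> rnd x2) = n"
    using assms by (simp_all add: n_def zscores_def epsv_def)
  show ?thesis
    unfolding sum_list_map2_conv_sum [OF len(1,2)] sum_list_map2_conv_sum [OF len(1,4)]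
      sum_list_map2_conv_sum [OF len(2,3)] sum_list_map2_conv_sum [OF len(3,4)]
    using len by (simp add: rounded_inner_def n_def [symmetric] epsv_def zt_num_def sum_distrib_left
      sum.distrib [symmetric] sum_subtractf [symmetric] algebra_simps power2_eq_square)
qed

lemma zt_num_bounds:
  assumes "nearest_rounding p \<delta> rnd" "0 < \<delta>" "R < of_int (fpM p) * \<delta>"
    and "\<forall>t\<in>set (zt \<delta> rnd x). \<bar>t\<bar> \<le> R" "j < length x"
  shows "\<bar>of_int (zt_num rnd x ! j) * \<delta>\<bar> \<le> R"
    and "\<bar>zscores x ! j - of_int (zt_num rnd x ! j) * \<delta>\<bar> \<le> \<delta> / 2"
proof -
  have "zt \<delta> rnd x ! j \<in> set (zt \<delta> rnd x)"
    using assms(5) by (intro nth_mem) (simp add: zt_def zscores_def)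
  moreover have "zt \<delta> rnd x ! j = of_int (zt_num rnd x ! j) * \<delta>"
    using assms(5) by (simp add: zt_def zt_num_def zscores_def)
  ultimately show radius: "\<bar>of_int (zt_num rnd x ! j) * \<delta>\<bar> \<le> R"
    using assms(4) by metis
  have "zt_num rnd x ! j = rnd (zscores x ! j)"
    using assms(5) by (simp add: zt_num_def zscores_def)
  then show "\<bar>zscores x ! j - of_int (zt_num rnd x ! j) * \<delta>\<bar> \<le> \<delta> / 2"
    using nearest_rounding_error [OF assms(1,2)] radius assms(3) by simp
qed

lemma rounded_inner_in_range:
  assumes "2 \<le> n" "0 < \<delta>" "0 < R" "nearest_rounding p \<delta> rnd"
    and M: "(real n - 1) / \<delta>\<^sup>2 + real n * (R / \<delta> + 1 / 4) \<le> of_int (fpM p)"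
    and "admissible n x1" "admissible n x2"
    and zt: "\<forall>t\<in>set (zt \<delta> rnd x1) \<union> set (zt \<delta> rnd x2). \<bar>t\<bar> \<le> R"
  shows "\<bar>rounded_inner rnd x1 x2\<bar> \<le> fpM p"
proof -
  have "1 * (R / \<delta>) \<le> real n * (R / \<delta>)"
    using assms(1-3) by (intro mult_right_mono) auto
  then have "R / \<delta> < real n * (R / \<delta> + 1 / 4)"
    using assms(1) by (simp add: distrib_left)
  moreover have "0 \<le> (real n - 1) / \<delta>\<^sup>2"
    using assms(1) by simp
  ultimately have "R / \<delta> < of_int (fpM p)"
    using M by linarith
  then have "R < of_int (fpM p) * \<delta>"
    using assms(2) by (simp add: pos_divide_less_eq)
  note bounds = zt_num_bounds [OF assms(4,2) this]
  have len: "length x1 = n" "length x2 = n"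
    using assms(6,7) by (simp_all add: admissible_def)
  have zt1: "\<forall>t\<in>set (zt \<delta> rnd x1). \<bar>t\<bar> \<le> R" and zt2: "\<forall>t\<in>set (zt \<delta> rnd x2). \<bar>t\<bar> \<le> R"
    using zt by simp_all
  have "\<bar>of_int (rounded_inner rnd x1 x2)\<bar> \<le> (real n - 1) / \<delta>\<^sup>2 + real n * (R / \<delta> + 1 / 4)"
    unfolding rounded_inner_def len(1)
    by (rule rounded_inner_bound [OF assms(2) sum_zscores_squared [OF assms(6,1)] sum_zscores_squared [OF assms(7,1)]
      bounds(2) [OF zt1, unfolded len(1)] bounds(2) [OF zt2, unfolded len(2)]
      bounds(1) [OF zt1, unfolded len(1)] bounds(1) [OF zt2, unfolded len(2)]])
  with M show ?thesis by linarith
qed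

(* On genuine leakage the argument of round is the integer a itself (inner_from_leakage_eq). *)
definition inner_from_leakage :: "real \<Rightarrow> nat \<Rightarrow> leakage \<Rightarrow> real \<Rightarrow> int" where
  "inner_from_leakage \<delta> n lk r = (case lk of (e1, e2, c12, c21) \<Rightarrow>
     round (((real n - 1) * r - c12 - c21 + sum_list (map2 (*) e1 e2)) / \<delta>\<^sup>2))"

lemma inner_from_leakage_eq:
  assumes "length x1 = n" "length x2 = n" "2 \<le> n" "0 < \<delta>"
  shows "inner_from_leakage \<delta> n (leak \<delta> rnd x1 x2) (pearson x1 x2) = rounded_inner rnd x1 x2"
proof -
  have "(real n - 1) * pearson x1 x2 = sum_list (map2 (*) (zscores x1) (zscores x2))"
    using assms(1,3) by (simp add: pearson_def)
  then show ?thesis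
    using assms sum_zscores_mult_decompose [of x1 x2 \<delta> rnd]
    by (simp add: inner_from_leakage_def leak_def field_simps)
qed

lemma protocol_output_eq_pearson:
  assumes "length x1 = n" "length x2 = n"
    and "fp_psi p (rounded_inner rnd x1 x2 mod p) = rounded_inner rnd x1 x2"
  shows "(fp_phi_inv p (\<delta>\<^sup>2) (rounded_inner rnd x1 x2 mod p)
     + (sum_list (map2 (*) (zscores x1) (epsv \<delta> rnd x2)) + sum_list (map2 (*) (zscores x2) (epsv \<delta> rnd x1)))
     - sum_list (map2 (*) (epsv \<delta> rnd x1) (epsv \<delta> rnd x2))) / (real n - 1) = pearson x1 x2"
  using assms sum_zscores_mult_decompose [of x1 x2 \<delta> rnd]
  by (simp add: fp_phi_inv_def pearson_def)

section \<open>The protocol run\<close>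

(* In the notation of exec_view: the opened values x_j - u_j and y_j - v_j and the two
   parties' shares [a]_1, [a]_2. *)
definition opened_x :: "int \<Rightarrow> (nat \<Rightarrow> int) \<Rightarrow> int list \<Rightarrow> int list \<Rightarrow> int list \<Rightarrow> nat \<Rightarrow> int" where
  "opened_x p X O1 Us RU j = (((X j - O1 ! j) mod p - RU ! j) mod p + (O1 ! j - (Us ! j - RU ! j) mod p) mod p) mod p"

definition opened_y :: "int \<Rightarrow> (nat \<Rightarrow> int) \<Rightarrow> int list \<Rightarrow> int list \<Rightarrow> int list \<Rightarrow> nat \<Rightarrow> int" where
  "opened_y p Y O2 Vs RV j = ((O2 ! j - RV ! j) mod p + ((Y j - O2 ! j) mod p - (Vs ! j - RV ! j) mod p) mod p) mod p"

definition exec_share1 :: "int \<Rightarrow> nat \<Rightarrow> (nat \<Rightarrow> int) \<Rightarrow> (nat \<Rightarrow> int) \<Rightarrow>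
    int list \<Rightarrow> int list \<Rightarrow> int list \<Rightarrow> int list \<Rightarrow> int list \<Rightarrow> int list \<Rightarrow> int list \<Rightarrow> int" where
  "exec_share1 p n X Y O1 O2 Us Vs RU RV RW = (\<Sum>j<n. (RW ! j + RU ! j * opened_y p Y O2 Vs RV j
      + RV ! j * opened_x p X O1 Us RU j + opened_x p X O1 Us RU j * opened_y p Y O2 Vs RV j) mod p) mod p"

definition exec_share2 :: "int \<Rightarrow> nat \<Rightarrow> (nat \<Rightarrow> int) \<Rightarrow> (nat \<Rightarrow> int) \<Rightarrow>
    int list \<Rightarrow> int list \<Rightarrow> int list \<Rightarrow> int list \<Rightarrow> int list \<Rightarrow> int list \<Rightarrow> int list \<Rightarrow> int" where
  "exec_share2 p n X Y O1 O2 Us Vs RU RV RW = (\<Sum>j<n. (((Us ! j * Vs ! j) mod p - RW ! j) mod p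
      + (Us ! j - RU ! j) mod p * opened_y p Y O2 Vs RV j + (Vs ! j - RV ! j) mod p * opened_x p X O1 Us RU j) mod p) mod p"

lemma exec_shares_sum_cong:
  "[exec_share1 p n X Y O1 O2 Us Vs RU RV RW + exec_share2 p n X Y O1 O2 Us Vs RU RV RW
     = \<Sum>j<n. X j * Y j] (mod p)"
proof -
  define d where "d = opened_x p X O1 Us RU"
  define e where "e = opened_y p Y O2 Vs RV"
  have "[(RW ! j + RU ! j * e j + RV ! j * d j + d j * e j)
        + (((Us ! j * Vs ! j) mod p - RW ! j) mod p + (Us ! j - RU ! j) mod p * e j
           + (Vs ! j - RV ! j) mod p * d j) = X j * Y j] (mod p)" for j
  proof (rule beaver_mult_cong)
    have u: "[RU ! j + (Us ! j - RU ! j) mod p = Us ! j] (mod p)"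
     and v: "[RV ! j + (Vs ! j - RV ! j) mod p = Vs ! j] (mod p)"
      by (simp_all add: cong_def mod_simps)
    have "[d j = X j - Us ! j] (mod p)" "[e j = Y j - Vs ! j] (mod p)"
      by (simp_all add: d_def e_def opened_x_def opened_y_def cong_def mod_simps)
    with u v show "[d j = X j - (RU ! j + (Us ! j - RU ! j) mod p)] (mod p)"
      and "[e j = Y j - (RV ! j + (Vs ! j - RV ! j) mod p)] (mod p)"
      by (meson cong_diff cong_refl cong_sym cong_trans)+
    show "[RW ! j + ((Us ! j * Vs ! j) mod p - RW ! j) mod p
          = (RU ! j + (Us ! j - RU ! j) mod p) * (RV ! j + (Vs ! j - RV ! j) mod p)] (mod p)"
      using cong_mult [OF u v] by (simp add: cong_def mod_simps)
  qed
  then have "[\<Sum>j<n. (RW ! j + RU ! j * e j + RV ! j * d j + d j * e j) mod p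
        + (((Us ! j * Vs ! j) mod p - RW ! j) mod p + (Us ! j - RU ! j) mod p * e j
           + (Vs ! j - RV ! j) mod p * d j) mod p = \<Sum>j<n. X j * Y j] (mod p)"
    by (intro cong_sum) (simp add: cong_def mod_simps)
  then show ?thesis
    unfolding exec_share1_def exec_share2_def d_def e_def cong_def by (simp only: mod_add_eq sum.distrib)
qed

lemma exec_shares_decode:
  fixes O1 O2 Us Vs RU RV RW :: "int list"
  assumes "length x1 = n" "length x2 = n" "0 < p"
    and decode: "fp_psi p (rounded_inner rnd x1 x2 mod p) = rounded_inner rnd x1 x2"
  defines "A1 \<equiv> exec_share1 p n (\<lambda>j. fp_phi p (zt_num rnd x1 ! j)) (\<lambda>j. fp_phi p (zt_num rnd x2 ! j))
      O1 O2 Us Vs RU RV RW"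
    and "A2 \<equiv> exec_share2 p n (\<lambda>j. fp_phi p (zt_num rnd x1 ! j)) (\<lambda>j. fp_phi p (zt_num rnd x2 ! j))
      O1 O2 Us Vs RU RV RW"
  shows "(rounded_inner rnd x1 x2 - A1) mod p = A2" "(rounded_inner rnd x1 x2 - A2) mod p = A1"
    and "(fp_phi_inv p (\<delta>\<^sup>2) ((A1 + A2) mod p)
     + (sum_list (map2 (*) (zscores x1) (epsv \<delta> rnd x2)) + sum_list (map2 (*) (zscores x2) (epsv \<delta> rnd x1)))
     - sum_list (map2 (*) (epsv \<delta> rnd x1) (epsv \<delta> rnd x2))) / (real n - 1) = pearson x1 x2"
proof -
  have "[A1 + A2 = \<Sum>j<n. fp_phi p (zt_num rnd x1 ! j) * fp_phi p (zt_num rnd x2 ! j)] (mod p)"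
    unfolding A1_def A2_def by (rule exec_shares_sum_cong)
  also have "[\<Sum>j<n. fp_phi p (zt_num rnd x1 ! j) * fp_phi p (zt_num rnd x2 ! j) = rounded_inner rnd x1 x2] (mod p)"
    unfolding rounded_inner_def assms(1) cong_def by (rule fp_phi_sum_mult_mod)
  finally have opened: "[A1 + A2 = rounded_inner rnd x1 x2] (mod p)" .
  then have "[A2 + A1 = rounded_inner rnd x1 x2] (mod p)"
    by (simp only: add.commute)
  moreover have "0 \<le> A1" "A1 < p" "0 \<le> A2" "A2 < p"
    by (simp_all add: A1_def A2_def exec_share1_def exec_share2_def \<open>0 < p\<close>)
  ultimately show "(rounded_inner rnd x1 x2 - A1) mod p = A2" "(rounded_inner rnd x1 x2 - A2) mod p = A1"
    using opened eq_mod_diff_if_cong_add by metis+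
  show "(fp_phi_inv p (\<delta>\<^sup>2) ((A1 + A2) mod p)
     + (sum_list (map2 (*) (zscores x1) (epsv \<delta> rnd x2)) + sum_list (map2 (*) (zscores x2) (epsv \<delta> rnd x1)))
     - sum_list (map2 (*) (epsv \<delta> rnd x1) (epsv \<delta> rnd x2))) / (real n - 1) = pearson x1 x2"
    using opened protocol_output_eq_pearson [OF assms(1,2) decode] by (simp add: cong_def)
qed

type_synonym sim_randomness = "int list \<times> int list \<times> int list \<times> int list \<times> int list \<times> int list"

type_synonym protocol_randomness = "int list \<times> sim_randomness"

definition sim_coins :: "int \<Rightarrow> nat \<Rightarrow> sim_randomness set" where
  "sim_coins p n = zp_vectors p n \<times> zp_vectors p n \<times> zp_vectors p n \<times> zp_vectors p n \<times> zp_vectors p n \<times> zp_vectors p n"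

definition protocol_coins :: "int \<Rightarrow> nat \<Rightarrow> protocol_randomness set" where
  "protocol_coins p n = zp_vectors p n \<times> sim_coins p n"

lemma protocol_coins_iff:
  "(O1, O2, Us, Vs, RU, RV, RW) \<in> protocol_coins p n \<longleftrightarrow>
     O1 \<in> zp_vectors p n \<and> O2 \<in> zp_vectors p n \<and> Us \<in> zp_vectors p n \<and> Vs \<in> zp_vectors p n \<and>
     RU \<in> zp_vectors p n \<and> RV \<in> zp_vectors p n \<and> RW \<in> zp_vectors p n"
  by (simp add: protocol_coins_def sim_coins_def)

lemma finite_protocol_coins: "finite (protocol_coins p n)"
  by (simp add: protocol_coins_def sim_coins_def)

lemma protocol_coins_not_empty: "0 < p \<Longrightarrow> protocol_coins p n \<noteq> {}"
  by (simp add: protocol_coins_def sim_coins_def)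

section \<open>The simulator\<close>

(* (G, U, V, W, D, E) stand for the received share of the honest party's value, the triple
   shares from F_BT and the honest party's openings. *)
definition sim_msgs :: "int \<Rightarrow> real \<Rightarrow> (real \<Rightarrow> int) \<Rightarrow> nat \<Rightarrow> real list \<Rightarrow> int list \<Rightarrow> leakage \<Rightarrow> real \<Rightarrow>
    sim_randomness \<Rightarrow> msgs" where
  "sim_msgs p \<delta> rnd c xc coins lk r = (\<lambda>(G, U, V, W, D, E). let
     n = length xc;
     own = (\<lambda>j. (fp_phi p (zt_num rnd xc ! j) - coins ! j) mod p);
     sx = (\<lambda>j. if c = 1 then own j else G ! j);
     sy = (\<lambda>j. if c = 1 then G ! j else own j);
     d = (\<lambda>j. (sx j - U ! j) mod p);
     e = (\<lambda>j. (sy j - V ! j) mod p);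
     DD = (\<lambda>j. (if c = 1 then d j + D ! j else D ! j + d j) mod p);
     EE = (\<lambda>j. (if c = 1 then e j + E ! j else E ! j + e j) mod p);
     a = (\<Sum>j<n. (W ! j + U ! j * EE j + V ! j * DD j + (if c = 1 then DD j * EE j else 0)) mod p) mod p
   in \<lparr> m_eps = (if c = 1 then fst (snd lk) else fst lk),
        m_cross = (if c = 1 then snd (snd (snd lk)) else fst (snd (snd lk))),
        m_shares = G,
        m_triples = map (\<lambda>j. (U ! j, V ! j, W ! j)) [0..<n],
        m_open = map (\<lambda>j. (D ! j, E ! j)) [0..<n],
        m_final = (inner_from_leakage \<delta> n lk r - a) mod p \<rparr>)"

definition sim :: "int \<Rightarrow> real \<Rightarrow> (real \<Rightarrow> int) \<Rightarrow> simulator" where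
  "sim p \<delta> rnd c xc coins lk r =
     map_pmf (sim_msgs p \<delta> rnd c xc coins lk r) (pmf_of_set (sim_coins p (length xc)))"

definition sim_view :: "int \<Rightarrow> real \<Rightarrow> (real \<Rightarrow> int) \<Rightarrow> nat \<Rightarrow> real list \<Rightarrow> real list \<Rightarrow>
    protocol_randomness \<Rightarrow> view" where
  "sim_view p \<delta> rnd c x1 x2 = (\<lambda>(coins, w). let xc = (if c = 1 then x1 else x2) in
     \<lparr> v_input = xc, v_coins = coins,
       v_msgs = sim_msgs p \<delta> rnd c xc coins (leak \<delta> rnd x1 x2) (pearson x1 x2) w,
       v_output = pearson x1 x2 \<rparr>)"

(* The corrupted party's coins followed by what the simulator samples, as a function of the
   coins of a run.  Every coin hidden from the corrupted party masks one of these values,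
   which makes seen_by_P1 and seen_by_P2 bijections of protocol_coins. *)
definition seen_by_P1 :: "int \<Rightarrow> nat \<Rightarrow> (nat \<Rightarrow> int) \<Rightarrow> protocol_randomness \<Rightarrow> protocol_randomness" where
  "seen_by_P1 p n Y = (\<lambda>(O1, O2, Us, Vs, RU, RV, RW).
     (O1, O2, RU, RV, RW, map (\<lambda>j. (O1 ! j - (Us ! j - RU ! j) mod p) mod p) [0..<n],
      map (\<lambda>j. ((Y j - O2 ! j) mod p - (Vs ! j - RV ! j) mod p) mod p) [0..<n]))"

definition seen_by_P2 :: "int \<Rightarrow> nat \<Rightarrow> (nat \<Rightarrow> int) \<Rightarrow> protocol_randomness \<Rightarrow> protocol_randomness" where
  "seen_by_P2 p n X = (\<lambda>(O1, O2, Us, Vs, RU, RV, RW).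
     (O2, O1, map (\<lambda>j. (Us ! j - RU ! j) mod p) [0..<n], map (\<lambda>j. (Vs ! j - RV ! j) mod p) [0..<n],
      map (\<lambda>j. ((Us ! j * Vs ! j) mod p - RW ! j) mod p) [0..<n],
      map (\<lambda>j. ((X j - O1 ! j) mod p - RU ! j) mod p) [0..<n], map (\<lambda>j. (O2 ! j - RV ! j) mod p) [0..<n]))"

definition seen_by :: "int \<Rightarrow> (real \<Rightarrow> int) \<Rightarrow> nat \<Rightarrow> real list \<Rightarrow> real list \<Rightarrow>
    protocol_randomness \<Rightarrow> protocol_randomness" where
  "seen_by p rnd c x1 x2 =
     (if c = 1 then seen_by_P1 p (length x1) (\<lambda>j. fp_phi p (zt_num rnd x2 ! j))
      else seen_by_P2 p (length x1) (\<lambda>j. fp_phi p (zt_num rnd x1 ! j)))"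

lemma leak_components:
  "fst (leak \<delta> rnd x1 x2) = epsv \<delta> rnd x1"
  "fst (snd (leak \<delta> rnd x1 x2)) = epsv \<delta> rnd x2"
  "fst (snd (snd (leak \<delta> rnd x1 x2))) = sum_list (map2 (*) (zscores x1) (epsv \<delta> rnd x2))"
  "snd (snd (snd (leak \<delta> rnd x1 x2))) = sum_list (map2 (*) (zscores x2) (epsv \<delta> rnd x1))"
  by (simp_all add: leak_def)

lemma nth_map_upt_zero:
  "j \<in> {..<n} \<Longrightarrow> map f [0..<n] ! j = f j" "j \<in> set [0..<n] \<Longrightarrow> map f [0..<n] ! j = f j"
  by simp_all

lemma exec_view_eq_sim_view:
  assumes "c \<in> {1, 2}" and coins: "(O1, O2, Us, Vs, RU, RV, RW) \<in> protocol_coins p n"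
    and len: "length x1 = n" "length x2 = n" and "2 \<le> n" "0 < \<delta>" "0 < p"
    and decode: "fp_psi p (rounded_inner rnd x1 x2 mod p) = rounded_inner rnd x1 x2"
  shows "exec_view p \<delta> rnd c x1 x2 O1 O2 Us Vs RU RV RW =
    sim_view p \<delta> rnd c x1 x2 (seen_by p rnd c x1 x2 (O1, O2, Us, Vs, RU, RV, RW))"
proof -
  have "length O1 = n" "length O2 = n"
    using coins by (simp_all add: protocol_coins_iff zp_vectors_def)
  then have shares: "map ((!) O1) [0..<n] = O1" "map ((!) O2) [0..<n] = O2"
    by (metis map_nth)+
  have nat_simps: "(3::nat) - 1 = 2" "(3::nat) - 2 = 1" "((2::nat) = 1) = False"
    by simp_all
  define X where "X = (\<lambda>j. fp_phi p (zt_num rnd x1 ! j))"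
  define Y where "Y = (\<lambda>j. fp_phi p (zt_num rnd x2 ! j))"
  have encode: "fp_phi p (zt_num rnd x1 ! j) = X j" "fp_phi p (zt_num rnd x2 ! j) = Y j" for j
    by (simp_all add: X_def Y_def)
  note facts = exec_shares_decode [OF len \<open>0 < p\<close> decode, folded X_def Y_def]
    inner_from_leakage_eq [OF len \<open>2 \<le> n\<close> \<open>0 < \<delta>\<close>] shares leak_components nth_map_upt_zero
  note folds = encode opened_x_def [symmetric] opened_y_def [symmetric] exec_share1_def [symmetric] exec_share2_def [symmetric]
  from \<open>c \<in> {1, 2}\<close> consider "c = 1" | "c = 2" by blast
  then show ?thesis
  proof cases
    case 1
    show ?thesis
      unfolding 1 exec_view_def sim_view_def sim_msgs_def seen_by_def seen_by_P1_def Let_def prod.case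
      by (simp only: view.ext_inject msgs.ext_inject if_True if_False simp_thms len nat_simps add_0_right
        prod.case folds facts cong: sum.cong map_cong)
  next
    case 2
    show ?thesis
      unfolding 2 exec_view_def sim_view_def sim_msgs_def seen_by_def seen_by_P2_def Let_def prod.case
      by (simp only: view.ext_inject msgs.ext_inject if_True if_False simp_thms len nat_simps add_0_right
        prod.case folds facts cong: sum.cong map_cong)
  qed
qed

lemma inj_on_protocol_coinsI:
  assumes "\<And>O1 O2 Us Vs RU RV RW O1' O2' Us' Vs' RU' RV' RW'.
    (O1, O2, Us, Vs, RU, RV, RW) \<in> protocol_coins p n \<Longrightarrow> (O1', O2', Us', Vs', RU', RV', RW') \<in> protocol_coins p n \<Longrightarrow>
    f (O1, O2, Us, Vs, RU, RV, RW) = f (O1', O2', Us', Vs', RU', RV', RW') \<Longrightarrow>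
    O1 = O1' \<and> O2 = O2' \<and> Us = Us' \<and> Vs = Vs' \<and> RU = RU' \<and> RV = RV' \<and> RW = RW'"
  shows "inj_on f (protocol_coins p n)"
  using assms unfolding inj_on_def by fast

lemma inj_on_seen_by_P1: "inj_on (seen_by_P1 p n Y) (protocol_coins p n)"
proof (rule inj_on_protocol_coinsI)
  fix O1 O2 Us Vs RU RV RW O1' O2' Us' Vs' RU' RV' RW'
  assume coins: "(O1, O2, Us, Vs, RU, RV, RW) \<in> protocol_coins p n" "(O1', O2', Us', Vs', RU', RV', RW') \<in> protocol_coins p n"
    and eq: "seen_by_P1 p n Y (O1, O2, Us, Vs, RU, RV, RW) = seen_by_P1 p n Y (O1', O2', Us', Vs', RU', RV', RW')"
  then have same: "O1' = O1 \<and> O2' = O2 \<and> RU' = RU \<and> RV' = RV \<and> RW' = RW"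
    by (simp add: seen_by_P1_def)
  have D: "\<And>j. j < n \<Longrightarrow> (O1 ! j - (Us ! j - RU ! j) mod p) mod p = (O1 ! j - (Us' ! j - RU ! j) mod p) mod p"
    and E: "\<And>j. j < n \<Longrightarrow> ((Y j - O2 ! j) mod p - (Vs ! j - RV ! j) mod p) mod p
                              = ((Y j - O2 ! j) mod p - (Vs' ! j - RV ! j) mod p) mod p"
    using eq by (simp_all add: seen_by_P1_def map_eq_conv same)
  have mem: "Us \<in> zp_vectors p n" "Us' \<in> zp_vectors p n" "Vs \<in> zp_vectors p n" "Vs' \<in> zp_vectors p n"
    using coins by (simp_all add: protocol_coins_iff)
  have "Us = Us'"
    by (rule zp_vectors_eq_if_diff_left [OF mem(1,2), of "\<lambda>j. O1 ! j + RU ! j"])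
      (use D in \<open>simp add: mod_simps diff_diff_eq2\<close>)
  moreover have "Vs = Vs'"
    by (rule zp_vectors_eq_if_diff_left [OF mem(3,4), of "\<lambda>j. (Y j - O2 ! j) mod p + RV ! j"])
      (use E in \<open>simp add: mod_simps diff_diff_eq2\<close>)
  ultimately show "O1 = O1' \<and> O2 = O2' \<and> Us = Us' \<and> Vs = Vs' \<and> RU = RU' \<and> RV = RV' \<and> RW = RW'"
    using same by simp
qed

lemma inj_on_seen_by_P2: "inj_on (seen_by_P2 p n X) (protocol_coins p n)"
proof (rule inj_on_protocol_coinsI)
  fix O1 O2 Us Vs RU RV RW O1' O2' Us' Vs' RU' RV' RW'
  assume coins: "(O1, O2, Us, Vs, RU, RV, RW) \<in> protocol_coins p n" "(O1', O2', Us', Vs', RU', RV', RW') \<in> protocol_coins p n"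
    and eq: "seen_by_P2 p n X (O1, O2, Us, Vs, RU, RV, RW) = seen_by_P2 p n X (O1', O2', Us', Vs', RU', RV', RW')"
  then have same: "O1' = O1 \<and> O2' = O2"
    by (simp add: seen_by_P2_def)
  have T1: "\<And>j. j < n \<Longrightarrow> (Us ! j - RU ! j) mod p = (Us' ! j - RU' ! j) mod p"
    and T2: "\<And>j. j < n \<Longrightarrow> (Vs ! j - RV ! j) mod p = (Vs' ! j - RV' ! j) mod p"
    and T3: "\<And>j. j < n \<Longrightarrow> ((Us ! j * Vs ! j) mod p - RW ! j) mod p = ((Us' ! j * Vs' ! j) mod p - RW' ! j) mod p"
    and D: "\<And>j. j < n \<Longrightarrow> ((X j - O1 ! j) mod p - RU ! j) mod p = ((X j - O1 ! j) mod p - RU' ! j) mod p"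
    and E: "\<And>j. j < n \<Longrightarrow> (O2 ! j - RV ! j) mod p = (O2 ! j - RV' ! j) mod p"
    using eq by (simp_all add: seen_by_P2_def map_eq_conv same)
  have mem: "Us \<in> zp_vectors p n" "Us' \<in> zp_vectors p n" "Vs \<in> zp_vectors p n" "Vs' \<in> zp_vectors p n"
    "RU \<in> zp_vectors p n" "RU' \<in> zp_vectors p n" "RV \<in> zp_vectors p n" "RV' \<in> zp_vectors p n"
    "RW \<in> zp_vectors p n" "RW' \<in> zp_vectors p n"
    using coins by (simp_all add: protocol_coins_iff)
  have RU: "RU = RU'"
    by (rule zp_vectors_eq_if_diff_left [OF mem(5,6)]) (fact D)
  have RV: "RV = RV'"
    by (rule zp_vectors_eq_if_diff_left [OF mem(7,8)]) (fact E)
  have Us: "Us = Us'"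
    by (rule zp_vectors_eq_if_diff_right [OF mem(1,2)]) (fact T1 [folded RU])
  have Vs: "Vs = Vs'"
    by (rule zp_vectors_eq_if_diff_right [OF mem(3,4)]) (fact T2 [folded RV])
  have "RW = RW'"
    by (rule zp_vectors_eq_if_diff_left [OF mem(9,10)]) (fact T3 [folded Us Vs])
  with same RU RV Us Vs show "O1 = O1' \<and> O2 = O2' \<and> Us = Us' \<and> Vs = Vs' \<and> RU = RU' \<and> RV = RV' \<and> RW = RW'"
    by simp
qed

lemma map_pmf_seen_by:
  assumes "0 < p"
  shows "map_pmf (seen_by p rnd c x1 x2) (pmf_of_set (protocol_coins p (length x1))) = pmf_of_set (protocol_coins p (length x1))"
proof (rule map_pmf_of_set_endo_inj)
  show "seen_by p rnd c x1 x2 ` protocol_coins p (length x1) \<subseteq> protocol_coins p (length x1)"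
    using assms by (auto simp: seen_by_def seen_by_P1_def seen_by_P2_def protocol_coins_iff map_mod_in_zp_vectors)
  show "inj_on (seen_by p rnd c x1 x2) (protocol_coins p (length x1))"
    by (simp add: seen_by_def inj_on_seen_by_P1 inj_on_seen_by_P2)
qed (simp_all add: finite_protocol_coins protocol_coins_not_empty assms)

lemma real_view_eq_map_pmf:
  assumes "0 < p"
  shows "real_view p \<delta> rnd c x1 x2 =
    map_pmf (\<lambda>(O1, O2, Us, Vs, RU, RV, RW). exec_view p \<delta> rnd c x1 x2 O1 O2 Us Vs RU RV RW)
      (pmf_of_set (protocol_coins p (length x1)))"
  unfolding real_view_def Let_def unif_vec_eq_pmf_of_set [OF assms] protocol_coins_def sim_coins_def
    map_pmf_def [symmetric]
  using assms by (simp add: bind_pmf_of_set_map_pmf)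

lemma ideal_view_eq_map_pmf:
  assumes "0 < p" "length x1 = length x2"
  shows "ideal_view (sim p \<delta> rnd) p \<delta> rnd c x1 x2 = map_pmf (sim_view p \<delta> rnd c x1 x2) (pmf_of_set (protocol_coins p (length x1)))"
proof -
  have "ideal_view (sim p \<delta> rnd) p \<delta> rnd c x1 x2 =
     bind_pmf (pmf_of_set (zp_vectors p (length x1)))
       (\<lambda>coins. map_pmf (\<lambda>w. sim_view p \<delta> rnd c x1 x2 (coins, w)) (pmf_of_set (sim_coins p (length x1))))"
    using assms unfolding ideal_view_def Let_def sim_def unif_vec_eq_pmf_of_set [OF assms(1)] map_pmf_comp
    by (intro bind_pmf_cong refl map_pmf_cong) (auto simp: sim_view_def)
  also have "\<dots> = map_pmf (sim_view p \<delta> rnd c x1 x2) (pmf_of_set (protocol_coins p (length x1)))"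
    using assms(1) unfolding protocol_coins_def
    by (subst bind_pmf_of_set_map_pmf) (auto simp: sim_coins_def)
  finally show ?thesis .
qed

lemma real_view_eq_ideal_view:
  assumes "c \<in> {1, 2}" "length x1 = n" "length x2 = n" "2 \<le> n" "0 < \<delta>" "0 < p"
    and "fp_psi p (rounded_inner rnd x1 x2 mod p) = rounded_inner rnd x1 x2"
  shows "real_view p \<delta> rnd c x1 x2 = ideal_view (sim p \<delta> rnd) p \<delta> rnd c x1 x2"
proof -
  let ?coins = "pmf_of_set (protocol_coins p n)"
  have "real_view p \<delta> rnd c x1 x2 =
      map_pmf (\<lambda>(O1, O2, Us, Vs, RU, RV, RW). exec_view p \<delta> rnd c x1 x2 O1 O2 Us Vs RU RV RW) ?coins"
    using real_view_eq_map_pmf assms(2,6) by blast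
  also have "\<dots> = map_pmf (sim_view p \<delta> rnd c x1 x2) (map_pmf (seen_by p rnd c x1 x2) ?coins)"
    unfolding map_pmf_comp using assms
    by (intro map_pmf_cong refl) (auto simp: finite_protocol_coins protocol_coins_not_empty exec_view_eq_sim_view)
  also have "\<dots> = map_pmf (sim_view p \<delta> rnd c x1 x2) ?coins"
    using map_pmf_seen_by [of p rnd c x1 x2] assms(2,6) by simp
  also have "\<dots> = ideal_view (sim p \<delta> rnd) p \<delta> rnd c x1 x2"
    using ideal_view_eq_map_pmf assms(2,3,6) by simp
  finally show ?thesis .
qed

theorem proposition1:
  fixes n :: nat and p :: int and \<delta> R :: real and rnd :: "real \<Rightarrow> int"
  assumes "n \<ge> 2" and "prime p" and "p > 2" and "\<delta> > 0" and "R > 0"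
    and "R \<le> real n / \<delta>"
    and "(real n - 1) / \<delta>^2 + real n * (R / \<delta> + 1/4) \<le> of_int (fpM p)"
    and "nearest_rounding p \<delta> rnd"
  shows "\<exists>S :: simulator. \<forall>c\<in>{1, 2}. \<forall>x1 x2.
           admissible n x1 \<and> admissible n x2 \<and>
           (\<forall>t\<in>set (zt \<delta> rnd x1) \<union> set (zt \<delta> rnd x2). \<bar>t\<bar> \<le> R)
           \<longrightarrow> indisting (real_view p \<delta> rnd c x1 x2) (ideal_view S p \<delta> rnd c x1 x2)"
proof (intro exI [of _ "sim p \<delta> rnd"] ballI allI impI, elim conjE)
  fix c :: nat and x1 x2
  assume "c \<in> {1, 2}" "admissible n x1" "admissible n x2"
    and "\<forall>t\<in>set (zt \<delta> rnd x1) \<union> set (zt \<delta> rnd x2). \<bar>t\<bar> \<le> R"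
  then have "\<bar>rounded_inner rnd x1 x2\<bar> \<le> fpM p"
    using assms by (intro rounded_inner_in_range) auto
  then have "fp_psi p (rounded_inner rnd x1 x2 mod p) = rounded_inner rnd x1 x2"
    using \<open>p > 2\<close> by (intro fp_psi_mod) auto
  then have "real_view p \<delta> rnd c x1 x2 = ideal_view (sim p \<delta> rnd) p \<delta> rnd c x1 x2"
    using \<open>c \<in> {1, 2}\<close> \<open>admissible n x1\<close> \<open>admissible n x2\<close> assms(1,3,4)
    by (intro real_view_eq_ideal_view) (auto simp: admissible_def)
  then show "indisting (real_view p \<delta> rnd c x1 x2) (ideal_view (sim p \<delta> rnd) p \<delta> rnd c x1 x2)"
    by (simp add: indisting_def)
qed

end
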